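(* Let $R=k[t,t^{-1}]$ and $\mathcal R=(R,d/dt)$, and let $\mathcal A_1,\mathcal A_2$ be $\mathcal R$-conformal superalgebras such that the canonical maps $R\to\mathrm{Ctd}_k(\mathcal A_i)$, $r\mapsto r_{\mathcal A_i}$, are $k$-algebra isomorphisms for $i=1,2$. Then $\mathcal A_1\cong\mathcal A_2$ as $k$-conformal superalgebras if and only if $\mathcal A_1\cong\mathcal A_2$ as $\mathcal R$-conformal superalgebras.
   Context: Let $k$ be a field of characteristic $0$. An $\mathcal R$-conformal superalgebra (for $\mathcal R=(R,\delta_R)$, $R$ a commutative unital $k$-algebra with $k$-linear derivation $\delta_R$) is a $\mathbb Z/2\mathbb Z$-graded $R$-module $\mathcal A$ with parity-preserving $k$-linear $\partial_{\mathcal A}$ and $k$-bilinear products $a_{(n)}b$ ($n\in\mathbb Z_+$) satisfying: $a_{(n)}b=0$ for $n\gg0$; $(\partial_{\mathcal A}a)_{(n)}b=-na_{(n-1)}b$, $a_{(n)}\partial_{\mathcal A}b=\partial_{\mathcal A}(a_{(n)}b)+na_{(n-1)}b$; $\partial_{\mathcal A}(ra)=r\partial_{\mathcal A}a+\delta_R(r)a$; $a_{(n)}(rb)=r(a_{(n)}b)$, $(ra)_{(n)}b=\sum_j\frac1{j!}\delta_R^j(r)(a_{(n+j)}b)$. Homomorphisms: even $R$-linear maps preserving $n$-products and commuting with $\partial$. $k$-conformal means over $(k,0)$; restriction of scalars makes $\mathcal R$-conformal superalgebras $k$-conformal. $\mathrm{Ctd}_k(\mathcal A)$ is the set of even $k$-linear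 endomorphisms $\chi$ with $\chi(a_{(n)}b)=a_{(n)}\chi(b)$ for all $a,b,n$; $r_{\mathcal A}$ is $a\mapsto ra$. *)

theory Defs
  imports Main "HOL-Computational_Algebra.Formal_Laurent_Series"
begin

text \<open>The ring R = k[t,t^-1] of Laurent polynomials, realised inside the formal
Laurent series: the series with finitely many nonzero coefficients.  The field k is realised as the constant series.\<close>

definition laurent_polys :: "'k::field fls set" where
  "laurent_polys = {f. finite {n. fls_nth f n \<noteq> 0}}"

definition const_scalars :: "'k::field fls set" where
  "const_scalars = range fls_const"

record ('r, 'a) cstruct =
  smul  :: "'r \<Rightarrow> 'a \<Rightarrow> 'a"
  evp   :: "'a set"
  odp   :: "'a set"
  der   :: "'a \<Rightarrow> 'a"
  nprod :: "nat \<Rightarrow> 'a \<Rightarrow> 'a \<Rightarrow> 'a"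

definition submodule_of :: "'k::field fls set \<Rightarrow> ('k fls \<Rightarrow> 'a \<Rightarrow> 'a) \<Rightarrow> 'a::ab_group_add set \<Rightarrow> bool" where
  "submodule_of S sm V \<longleftrightarrow> 0 \<in> V \<and> (\<forall>x\<in>V. \<forall>y\<in>V. x + y \<in> V) \<and> (\<forall>x\<in>V. - x \<in> V)
     \<and> (\<forall>r\<in>S. \<forall>x\<in>V. sm r x \<in> V)"

text \<open>An (S,\<delta>)-conformal superalgebra, where S is a commutative subring of the
Laurent series (S = laurent_polys with \<delta> = fls_deriv gives R-conformal
superalgebras; S = const_scalars with \<delta> = 0 gives k-conformal ones).
k-linearity means linearity w.r.t. the constant scalars fls_const c.\<close>

definition conformal_superalgebra ::
  "'k::field_char_0 fls set \<Rightarrow> ('k fls \<Rightarrow> 'k fls) \<Rightarrow> ('k fls, 'a::ab_group_add) cstruct \<Rightarrow> bool" where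
  "conformal_superalgebra S \<delta> A \<longleftrightarrow>
     \<comment> \<open>S-module\<close>
     (\<forall>r\<in>S. \<forall>a b. smul A r (a + b) = smul A r a + smul A r b) \<and>
     (\<forall>r\<in>S. \<forall>s\<in>S. \<forall>a. smul A (r + s) a = smul A r a + smul A s a) \<and>
     (\<forall>r\<in>S. \<forall>s\<in>S. \<forall>a. smul A (r * s) a = smul A r (smul A s a)) \<and>
     (\<forall>a. smul A 1 a = a) \<and>
     \<comment> \<open>Z/2Z-grading as a direct sum of submodules\<close>
     submodule_of S (smul A) (evp A) \<and> submodule_of S (smul A) (odp A) \<and>
     evp A \<inter> odp A = {0} \<and> (\<forall>a. \<exists>x\<in>evp A. \<exists>y\<in>odp A. a = x + y) \<and>
     \<comment> \<open>\<partial> parity preserving and k-linear\<close>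
     der A ` evp A \<subseteq> evp A \<and> der A ` odp A \<subseteq> odp A \<and>
     (\<forall>a b. der A (a + b) = der A a + der A b) \<and>
     (\<forall>c a. der A (smul A (fls_const c) a) = smul A (fls_const c) (der A a)) \<and>
     \<comment> \<open>n-products k-bilinear\<close>
     (\<forall>n a b c. nprod A n (a + b) c = nprod A n a c + nprod A n b c) \<and>
     (\<forall>n a b c. nprod A n a (b + c) = nprod A n a b + nprod A n a c) \<and>
     (\<forall>n x a b. nprod A n (smul A (fls_const x) a) b = smul A (fls_const x) (nprod A n a b)) \<and>
     (\<forall>n x a b. nprod A n a (smul A (fls_const x) b) = smul A (fls_const x) (nprod A n a b)) \<and>
     \<comment> \<open>locality\<close>
     (\<forall>a b. \<exists>N. \<forall>n\<ge>N. nprod A n a b = 0) \<and>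
     \<comment> \<open>(\<partial>a)_(n) b = - n a_(n-1) b   and   a_(n) \<partial>b = \<partial>(a_(n) b) + n a_(n-1) b
         (for n = 0 the terms with the factor n vanish)\<close>
     (\<forall>n a b. nprod A n (der A a) b = - smul A (of_nat n) (nprod A (n - 1) a b)) \<and>
     (\<forall>n a b. nprod A n a (der A b) = der A (nprod A n a b) + smul A (of_nat n) (nprod A (n - 1) a b)) \<and>
     \<comment> \<open>\<partial>(ra) = r \<partial>a + \<delta>(r) a\<close>
     (\<forall>r\<in>S. \<forall>a. der A (smul A r a) = smul A r (der A a) + smul A (\<delta> r) a) \<and>
     \<comment> \<open>a_(n)(rb) = r (a_(n) b)\<close>
     (\<forall>r\<in>S. \<forall>n a b. nprod A n a (smul A r b) = smul A r (nprod A n a b)) \<and>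
     \<comment> \<open>(ra)_(n) b = \<Sum>_j (1/j!) \<delta>^j(r) (a_(n+j) b), a finite sum by locality\<close>
     (\<forall>r\<in>S. \<forall>n a b N. (\<forall>m\<ge>N. nprod A m a b = 0) \<longrightarrow>
        nprod A n (smul A r a) b =
          (\<Sum>j<N. smul A (fls_const (1 / fact j) * (\<delta> ^^ j) r) (nprod A (n + j) a b)))"

definition conformal_hom ::
  "'k::field_char_0 fls set \<Rightarrow> ('k fls, 'a::ab_group_add) cstruct \<Rightarrow> ('k fls, 'b::ab_group_add) cstruct
     \<Rightarrow> ('a \<Rightarrow> 'b) \<Rightarrow> bool" where
  "conformal_hom S A B f \<longleftrightarrow>
     (\<forall>a b. f (a + b) = f a + f b) \<and>
     (\<forall>r\<in>S. \<forall>a. f (smul A r a) = smul B r (f a)) \<and>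
     f ` evp A \<subseteq> evp B \<and> f ` odp A \<subseteq> odp B \<and>
     (\<forall>n a b. f (nprod A n a b) = nprod B n (f a) (f b)) \<and>
     (\<forall>a. f (der A a) = der B (f a))"

definition conformal_iso ::
  "'k::field_char_0 fls set \<Rightarrow> ('k fls, 'a::ab_group_add) cstruct \<Rightarrow> ('k fls, 'b::ab_group_add) cstruct
     \<Rightarrow> ('a \<Rightarrow> 'b) \<Rightarrow> bool" where
  "conformal_iso S A B f \<longleftrightarrow> conformal_hom S A B f \<and> bij f"

definition conformal_isomorphic ::
  "'k::field_char_0 fls set \<Rightarrow> ('k fls, 'a::ab_group_add) cstruct \<Rightarrow> ('k fls, 'b::ab_group_add) cstruct \<Rightarrow> bool" where
  "conformal_isomorphic S A B \<longleftrightarrow> (\<exists>f. conformal_iso S A B f)"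

definition Ctd_k :: "('k::field_char_0 fls, 'a::ab_group_add) cstruct \<Rightarrow> ('a \<Rightarrow> 'a) set" where
  "Ctd_k A = {\<chi>. (\<forall>a b. \<chi> (a + b) = \<chi> a + \<chi> b) \<and>
                 (\<forall>c a. \<chi> (smul A (fls_const c) a) = smul A (fls_const c) (\<chi> a)) \<and>
                 \<chi> ` evp A \<subseteq> evp A \<and> \<chi> ` odp A \<subseteq> odp A \<and>
                 (\<forall>n a b. \<chi> (nprod A n a b) = nprod A n a (\<chi> b))}"

definition canonical_map_is_iso :: "('k::field_char_0 fls, 'a::ab_group_add) cstruct \<Rightarrow> bool" where
  "canonical_map_is_iso A \<longleftrightarrow>
     bij_betw (\<lambda>r. smul A r) laurent_polys (Ctd_k A) \<and>
     smul A 1 = id \<and>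
     (\<forall>r\<in>laurent_polys. \<forall>s\<in>laurent_polys. smul A (r * s) = smul A r \<circ> smul A s) \<and>
     (\<forall>r\<in>laurent_polys. \<forall>s\<in>laurent_polys. smul A (r + s) = (\<lambda>a. smul A r a + smul A s a)) \<and>
     (\<forall>c. \<forall>r\<in>laurent_polys. smul A (fls_const c * r) = smul A (fls_const c) \<circ> smul A r)"

end

theory Submission
  imports Defs
begin

(* Restriction of scalars turns every R-isomorphism into a k-isomorphism,
   so only the converse needs work.  Let f : A1 -> A2 be a k-isomorphism.  Conjugating
   the centroid element r_{A2} by f gives an element of Ctd_k(A1), which by hypothesis
   is s_{A1} for a unique s in R; thus f(s a) = r f(a).  As f commutes with the
   derivations, the Leibniz rule gives f(s' a) = r' f(a) for the derivatives s', r'.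
   For r = t this forces s' = 1, hence s = t + c; as t is a unit of R so is t + c,
   which forces c = 0, and then t^-1 is matched with t^-1 as well.  The scalars r with
   f(r a) = r f(a) form a subring containing k, t and t^-1, hence all of k[t,t^-1], so
   f is R-linear.  (Only the hypothesis on Ctd_k(A1) is needed.) *)

section \<open>Laurent polynomials\<close>

lemma const_in_laurent_polys: "fls_const c \<in> laurent_polys"
  unfolding laurent_polys_def by (auto intro: finite_subset[of _ "{0}"])

lemma one_in_laurent_polys: "1 \<in> laurent_polys"
  using const_in_laurent_polys[of 1] by simp

lemma const_scalars_subset_laurent_polys: "const_scalars \<subseteq> laurent_polys"
  unfolding const_scalars_def using const_in_laurent_polys by blast

lemma X_in_laurent_polys: "fls_X \<in> laurent_polys"
  unfolding laurent_polys_def by (auto intro: finite_subset[of _ "{1}"])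

lemma X_inv_in_laurent_polys: "fls_X_inv \<in> laurent_polys"
  unfolding laurent_polys_def by (auto intro: finite_subset[of _ "{-1}"])

lemma X_intpow_in_laurent_polys: "(fls_X_intpow n :: 'k::field fls) \<in> laurent_polys"
  unfolding laurent_polys_def by (auto intro: finite_subset[of _ "{n}"])

lemma add_in_laurent_polys:
  fixes r s :: "'k::field fls"
  assumes "r \<in> laurent_polys" "s \<in> laurent_polys"
  shows "r + s \<in> laurent_polys"
proof -
  have "{n. fls_nth (r + s) n \<noteq> 0} \<subseteq> {n. fls_nth r n \<noteq> 0} \<union> {n. fls_nth s n \<noteq> 0}"
    by auto
  thus ?thesis using assms unfolding laurent_polys_def by (auto intro: finite_subset)
qed

text \<open>A nonzero coefficient of a product comes from a pair of nonzero coefficients of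
  the factors, so the support of r * s lies in the sumset of the supports.\<close>

lemma mult_in_laurent_polys:
  fixes r s :: "'k::field fls"
  assumes "r \<in> laurent_polys" "s \<in> laurent_polys"
  shows "r * s \<in> laurent_polys"
proof -
  let ?supp = "\<lambda>f :: 'k fls. {n. fls_nth f n \<noteq> 0}"
  have "?supp (r * s) \<subseteq> (\<lambda>(i, j). i + j) ` (?supp r \<times> ?supp s)"
  proof
    fix n assume "n \<in> ?supp (r * s)"
    hence "(\<Sum>i = fls_subdegree r..n - fls_subdegree s. fls_nth r i * fls_nth s (n - i)) \<noteq> 0"
      by (simp add: fls_times_nth(2))
    then obtain i where "fls_nth r i * fls_nth s (n - i) \<noteq> 0"
      by (meson sum.not_neutral_contains_not_neutral)
    thus "n \<in> (\<lambda>(i, j). i + j) ` (?supp r \<times> ?supp s)"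
      by (intro image_eqI[of _ _ "(i, n - i)"]) auto
  qed
  thus ?thesis using assms unfolding laurent_polys_def by (auto intro: finite_subset)
qed

text \<open>R is closed under d/dt, which shifts the support down by one.\<close>

lemma deriv_in_laurent_polys:
  fixes r :: "'k::field_char_0 fls"
  assumes "r \<in> laurent_polys"
  shows "fls_deriv r \<in> laurent_polys"
proof -
  have "{n. fls_nth (fls_deriv r) n \<noteq> 0} \<subseteq> (\<lambda>n. n - 1) ` {n. fls_nth r n \<noteq> 0}"
  proof
    fix n assume "n \<in> {n. fls_nth (fls_deriv r) n \<noteq> 0}"
    hence "fls_nth r (n + 1) \<noteq> 0" by auto
    thus "n \<in> (\<lambda>n. n - 1) ` {n. fls_nth r n \<noteq> 0}" by (intro image_eqI[of _ _ "n + 1"]) auto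
  qed
  thus ?thesis using assms unfolding laurent_polys_def by (auto intro: finite_subset)
qed

lemma laurent_poly_monomial_sum:
  fixes r :: "'k::field fls"
  assumes "r \<in> laurent_polys"
  shows "r = (\<Sum>n\<in>{n. fls_nth r n \<noteq> 0}. fls_const (fls_nth r n) * fls_X_intpow n)"
proof (rule fls_eqI)
  fix k
  have "finite {n. fls_nth r n \<noteq> 0}" using assms unfolding laurent_polys_def by simp
  thus "fls_nth r k = fls_nth (\<Sum>n\<in>{n. fls_nth r n \<noteq> 0}. fls_const (fls_nth r n) * fls_X_intpow n) k"
    by (simp add: fls_nth_sum if_distrib cong: if_cong)
qed

lemma laurent_polys_induct[consumes 1, case_names const X X_inv add mult]:
  fixes P :: "'k::field fls \<Rightarrow> bool"
  assumes r: "r \<in> laurent_polys"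
    and const: "\<And>c. P (fls_const c)"
    and X: "P fls_X"
    and X_inv: "P fls_X_inv"
    and add: "\<And>p q. p \<in> laurent_polys \<Longrightarrow> q \<in> laurent_polys \<Longrightarrow> P p \<Longrightarrow> P q \<Longrightarrow> P (p + q)"
    and mult: "\<And>p q. p \<in> laurent_polys \<Longrightarrow> q \<in> laurent_polys \<Longrightarrow> P p \<Longrightarrow> P q \<Longrightarrow> P (p * q)"
  shows "P r"
proof -
  have power: "P (x ^ k)" if "x \<in> laurent_polys" "P x" for x :: "'k fls" and k
  proof (induction k)
    case 0 show ?case using const[of 1] by simp
  next
    case (Suc k)
    have "x ^ k \<in> laurent_polys"
      by (induction k) (simp_all add: mult_in_laurent_polys that(1) one_in_laurent_polys)
    thus ?case using mult[OF that(1)] Suc that(2) by simp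
  qed
  have monomial: "P (fls_const c * fls_X_intpow n)" for c n
  proof -
    have "fls_X_intpow n = (if n \<ge> 0 then fls_X ^ nat n else (fls_X_inv ^ nat (-n) :: 'k fls))"
      by (simp add: fls_X_power_conv_shift_1 fls_X_inv_power_conv_shift_1)
    hence "P (fls_X_intpow n)"
      using power[OF X_in_laurent_polys X] power[OF X_inv_in_laurent_polys X_inv] by simp
    thus ?thesis
      using mult[OF const_in_laurent_polys X_intpow_in_laurent_polys const] by blast
  qed
  have "P (\<Sum>n\<in>N. fls_const (c n) * fls_X_intpow n) \<and>
        (\<Sum>n\<in>N. fls_const (c n) * fls_X_intpow n) \<in> laurent_polys"
    if "finite N" for N and c :: "int \<Rightarrow> 'k"
    using that
  proof (induction N rule: finite_induct)
    case empty show ?case using const[of 0] const_in_laurent_polys[of 0] by simp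
  next
    case (insert n N)
    have mono: "fls_const (c n) * fls_X_intpow n \<in> laurent_polys"
      by (rule mult_in_laurent_polys[OF const_in_laurent_polys X_intpow_in_laurent_polys])
    have rest: "(\<Sum>n\<in>N. fls_const (c n) * fls_X_intpow n) \<in> laurent_polys"
      using insert.IH by blast
    show ?case
      using insert add[OF mono rest monomial] add_in_laurent_polys[OF mono rest] by simp
  qed
  moreover have "finite {n. fls_nth r n \<noteq> 0}" using r unfolding laurent_polys_def by simp
  ultimately show ?thesis using laurent_poly_monomial_sum[OF r] by metis
qed

text \<open>t + c is a unit of R only for c = 0: otherwise both the top and the bottom
  coefficient of its inverse h would produce coefficients of (t + c) h = 1 in degrees
  top + 1 > 0 and bottom, forcing top + 1 = 0 = bottom, which is absurd.\<close>

lemma X_plus_const_unit_imp_zero: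
  fixes c :: "'k::field"
  assumes inv: "(fls_X + fls_const c) * h = 1" and h: "h \<in> laurent_polys"
  shows "c = 0"
proof (rule ccontr)
  assume c: "c \<noteq> 0"
  have coeff: "fls_nth ((fls_X + fls_const c) * h) n = fls_nth h (n - 1) + c * fls_nth h n" for n
    by (simp add: distrib_right fls_X_times_conv_shift)
  let ?S = "{n. fls_nth h n \<noteq> 0}"
  have fin: "finite ?S" using h unfolding laurent_polys_def by simp
  have "h \<noteq> 0" using inv by auto
  then obtain k where "fls_nth h k \<noteq> 0" using fls_nonzero_nth by blast
  hence ne: "?S \<noteq> {}" by auto
  define top where "top = Max ?S"
  define bot where "bot = Min ?S"
  have top: "fls_nth h top \<noteq> 0" "\<And>n. fls_nth h n \<noteq> 0 \<Longrightarrow> n \<le> top"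
    using fin ne Max_in Max_ge unfolding top_def by auto
  have bot: "fls_nth h bot \<noteq> 0" "\<And>n. fls_nth h n \<noteq> 0 \<Longrightarrow> bot \<le> n"
    using fin ne Min_in Min_le unfolding bot_def by auto
  have "fls_nth h (top + 1) = 0" using top(2)[of "top + 1"] by auto
  hence "fls_nth ((fls_X + fls_const c) * h) (top + 1) \<noteq> 0" using coeff[of "top + 1"] top(1) by simp
  hence "top + 1 = 0" using inv by (auto split: if_splits)
  have "fls_nth h (bot - 1) = 0" using bot(2)[of "bot - 1"] by auto
  hence "fls_nth ((fls_X + fls_const c) * h) bot \<noteq> 0" using coeff[of bot] bot(1) c by simp
  hence "bot = 0" using inv by (auto split: if_splits)
  moreover have "bot \<le> top" using bot(1) top(2) by auto
  ultimately show False using \<open>top + 1 = 0\<close> by simp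
qed

lemma unit_with_derivative_one:
  fixes s h :: "'k::field_char_0 fls"
  assumes "fls_deriv s = 1" "s * h = 1" "h \<in> laurent_polys"
  shows "s = fls_X"
proof -
  obtain c where s: "s = fls_const c + fls_X"
    using assms(1) fls_deriv_eq_iff_ex[of s fls_X] by auto
  hence "(fls_X + fls_const c) * h = 1" using assms(2) by (simp add: add.commute)
  hence "c = 0" using assms(3) by (rule X_plus_const_unit_imp_zero)
  thus ?thesis using s by simp
qed

lemma cs_smul_add:
  "conformal_superalgebra S \<delta> A \<Longrightarrow> r \<in> S \<Longrightarrow> smul A r (a + b) = smul A r a + smul A r b"
  by (simp add: conformal_superalgebra_def)

lemma cs_add_smul:
  "conformal_superalgebra S \<delta> A \<Longrightarrow> r \<in> S \<Longrightarrow> s \<in> S \<Longrightarrow> smul A (r + s) a = smul A r a + smul A s a"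
  by (simp add: conformal_superalgebra_def)

lemma cs_mult_smul:
  "conformal_superalgebra S \<delta> A \<Longrightarrow> r \<in> S \<Longrightarrow> s \<in> S \<Longrightarrow> smul A (r * s) a = smul A r (smul A s a)"
  by (simp add: conformal_superalgebra_def)

lemma cs_one_smul: "conformal_superalgebra S \<delta> A \<Longrightarrow> smul A 1 a = a"
  by (simp add: conformal_superalgebra_def)

lemma cs_grading:
  assumes "conformal_superalgebra S \<delta> A"
  shows "submodule_of S (smul A) (evp A)" "submodule_of S (smul A) (odp A)"
    and "evp A \<inter> odp A = {0}" "\<forall>a. \<exists>x\<in>evp A. \<exists>y\<in>odp A. a = x + y"
  using assms by (simp_all add: conformal_superalgebra_def)

lemma cs_der_smul:
  "conformal_superalgebra S \<delta> A \<Longrightarrow> r \<in> S \<Longrightarrow>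
     der A (smul A r a) = smul A r (der A a) + smul A (\<delta> r) a"
  by (simp add: conformal_superalgebra_def)

lemma cs_nprod_smul:
  "conformal_superalgebra S \<delta> A \<Longrightarrow> r \<in> S \<Longrightarrow> nprod A n a (smul A r b) = smul A r (nprod A n a b)"
  by (simp add: conformal_superalgebra_def)

section \<open>Isomorphisms and the centroid\<close>

lemma conformal_hom_restrict:
  "conformal_hom T A B f \<Longrightarrow> S \<subseteq> T \<Longrightarrow> conformal_hom S A B f"
  unfolding conformal_hom_def by blast

lemma inverse_preserves_part:
  fixes f :: "'a::ab_group_add \<Rightarrow> 'b::ab_group_add"
  assumes "bij f" and add: "\<And>a b. f (a + b) = f a + f b"
    and "f ` Ev \<subseteq> Ev'" "f ` Od \<subseteq> Od'"
    and split: "\<And>a. \<exists>x\<in>Ev. \<exists>y\<in>Od. a = x + y"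
    and ev_add: "\<And>x y. x \<in> Ev' \<Longrightarrow> y \<in> Ev' \<Longrightarrow> x + y \<in> Ev'"
    and ev_neg: "\<And>x. x \<in> Ev' \<Longrightarrow> - x \<in> Ev'"
    and disjoint: "Ev' \<inter> Od' = {0}"
  shows "inv f ` Ev' \<subseteq> Ev"
proof
  fix z assume "z \<in> inv f ` Ev'"
  then obtain y where y: "y \<in> Ev'" "z = inv f y" by blast
  obtain e d where eo: "e \<in> Ev" "d \<in> Od" "z = e + d" using split by blast
  have f0: "f 0 = 0" using add[of 0 0] by (metis add.right_neutral add_left_cancel)
  have "f z = y" using y(2) \<open>bij f\<close> by (simp add: bij_inv_eq_iff)
  hence "f d = y + - f e" using eo(3) add[of e d] by (simp add: algebra_simps)
  moreover have "f e \<in> Ev'" "f d \<in> Od'" using eo assms(3,4) by blast+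
  ultimately have "f d \<in> Ev' \<inter> Od'" using ev_add[OF y(1) ev_neg] by simp
  hence "f d = 0" using disjoint by blast
  hence "f d = f 0" using f0 by simp
  hence "d = 0" using \<open>bij f\<close> by (meson bij_def injD)
  thus "z \<in> Ev" using eo by simp
qed

lemma conformal_iso_inverse:
  assumes A: "conformal_superalgebra T \<delta> A" and B: "conformal_superalgebra T' \<delta>' B"
    and iso: "conformal_iso S A B f"
  shows "conformal_iso S B A (inv f)"
proof -
  have hom: "conformal_hom S A B f" and "bij f" using iso unfolding conformal_iso_def by blast+
  have f_inv: "f (inv f y) = y" "inv f (f x) = x" for x y
    using \<open>bij f\<close> by (simp_all add: bij_is_surj surj_f_inv_f bij_is_inj)
  have transfer: "inv f y = x" if "y = f x" for x y using that f_inv by simp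
  have add: "\<And>a b. f (a + b) = f a + f b"
    and smul: "\<And>r a. r \<in> S \<Longrightarrow> f (smul A r a) = smul B r (f a)"
    and par: "f ` evp A \<subseteq> evp B" "f ` odp A \<subseteq> odp B"
    and nprod: "\<And>n a b. f (nprod A n a b) = nprod B n (f a) (f b)"
    and der: "\<And>a. f (der A a) = der B (f a)"
    using hom unfolding conformal_hom_def by blast+
  have B_ev: "\<And>x y. x \<in> evp B \<Longrightarrow> y \<in> evp B \<Longrightarrow> x + y \<in> evp B" "\<And>x. x \<in> evp B \<Longrightarrow> - x \<in> evp B"
    and B_od: "\<And>x y. x \<in> odp B \<Longrightarrow> y \<in> odp B \<Longrightarrow> x + y \<in> odp B" "\<And>x. x \<in> odp B \<Longrightarrow> - x \<in> odp B"
    using cs_grading(1,2)[OF B] unfolding submodule_of_def by blast+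
  have split_ev: "\<And>a. \<exists>x\<in>evp A. \<exists>y\<in>odp A. a = x + y"
    using cs_grading(4)[OF A] by blast
  have split_od: "\<And>a. \<exists>x\<in>odp A. \<exists>y\<in>evp A. a = x + y"
    using split_ev by (metis add.commute)
  have disj: "evp B \<inter> odp B = {0}" "odp B \<inter> evp B = {0}" using cs_grading(3)[OF B] by blast+
  have "conformal_hom S B A (inv f)"
    unfolding conformal_hom_def
  proof (intro conjI allI ballI)
    show "inv f ` evp B \<subseteq> evp A"
      using inverse_preserves_part[OF \<open>bij f\<close> add par split_ev B_ev disj(1)] .
    show "inv f ` odp B \<subseteq> odp A"
      using inverse_preserves_part[OF \<open>bij f\<close> add par(2,1) split_od B_od disj(2)] .
    show "inv f (a + b) = inv f a + inv f b" for a b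
      by (rule transfer) (simp add: add f_inv)
    show "inv f (smul B r a) = smul A r (inv f a)" if "r \<in> S" for r a
      by (rule transfer) (simp add: smul[OF that] f_inv)
    show "inv f (nprod B n a b) = nprod A n (inv f a) (inv f b)" for n a b
      by (rule transfer) (simp add: nprod f_inv)
    show "inv f (der B a) = der A (inv f a)" for a
      by (rule transfer) (simp add: der f_inv)
  qed
  thus ?thesis using \<open>bij f\<close> bij_imp_bij_inv unfolding conformal_iso_def by blast
qed

text \<open>Multiplication by a scalar that contains the constants lies in the centroid:
  it is k-linear because S is commutative, and it commutes with left n-products.\<close>

lemma smul_in_Ctd_k:
  assumes A: "conformal_superalgebra S \<delta> A" and "const_scalars \<subseteq> S" and r: "r \<in> S"
  shows "smul A r \<in> Ctd_k A"
proof -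
  have c: "fls_const c \<in> S" for c using assms(2) unfolding const_scalars_def by blast
  have "smul A r ` evp A \<subseteq> evp A" "smul A r ` odp A \<subseteq> odp A"
    using cs_grading(1,2)[OF A] r unfolding submodule_of_def by blast+
  moreover have "smul A r (smul A (fls_const c) a) = smul A (fls_const c) (smul A r a)" for c a
    using cs_mult_smul[OF A r c] cs_mult_smul[OF A c r] by (simp add: mult.commute)
  ultimately show ?thesis
    unfolding Ctd_k_def using cs_smul_add[OF A r] cs_nprod_smul[OF A r] by auto
qed

lemma Ctd_k_conjugate:
  fixes A :: "('k::field_char_0 fls, 'a::ab_group_add) cstruct"
    and B :: "('k fls, 'b::ab_group_add) cstruct"
  assumes f: "conformal_hom const_scalars A B f" and g: "conformal_hom const_scalars B A g"
    and gf: "\<And>a. g (f a) = a" and \<phi>: "\<phi> \<in> Ctd_k B"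
  shows "g \<circ> \<phi> \<circ> f \<in> Ctd_k A"
proof -
  have c: "fls_const c \<in> const_scalars" for c :: 'k unfolding const_scalars_def by blast
  have f_add: "\<And>a b. f (a + b) = f a + f b"
    and f_c: "\<And>c a. f (smul A (fls_const c) a) = smul B (fls_const c) (f a)"
    and f_par: "f ` evp A \<subseteq> evp B" "f ` odp A \<subseteq> odp B"
    and f_nprod: "\<And>n a b. f (nprod A n a b) = nprod B n (f a) (f b)"
    using f c unfolding conformal_hom_def by blast+
  have g_add: "\<And>a b. g (a + b) = g a + g b"
    and g_c: "\<And>c a. g (smul B (fls_const c) a) = smul A (fls_const c) (g a)"
    and g_par: "g ` evp B \<subseteq> evp A" "g ` odp B \<subseteq> odp A"
    and g_nprod: "\<And>n a b. g (nprod B n a b) = nprod A n (g a) (g b)"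
    using g c unfolding conformal_hom_def by blast+
  have \<phi>_add: "\<And>a b. \<phi> (a + b) = \<phi> a + \<phi> b"
    and \<phi>_c: "\<And>c a. \<phi> (smul B (fls_const c) a) = smul B (fls_const c) (\<phi> a)"
    and \<phi>_par: "\<phi> ` evp B \<subseteq> evp B" "\<phi> ` odp B \<subseteq> odp B"
    and \<phi>_nprod: "\<And>n a b. \<phi> (nprod B n a b) = nprod B n a (\<phi> b)"
    using \<phi> by (simp_all add: Ctd_k_def)
  have "g (\<phi> (f (nprod A n a b))) = nprod A n a (g (\<phi> (f b)))" for n a b
    by (simp add: f_nprod \<phi>_nprod g_nprod gf)
  moreover have "(g \<circ> \<phi> \<circ> f) ` evp A \<subseteq> evp A" "(g \<circ> \<phi> \<circ> f) ` odp A \<subseteq> odp A"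
    using f_par \<phi>_par g_par by (auto simp: image_subset_iff)
  ultimately show ?thesis
    unfolding Ctd_k_def by (simp add: f_add \<phi>_add g_add f_c \<phi>_c g_c)
qed

lemma intertwining_derivative:
  assumes A: "conformal_superalgebra S \<delta> A" and B: "conformal_superalgebra S \<delta> B"
    and r: "r \<in> S" and s: "s \<in> S"
    and add: "\<And>a b. f (a + b) = f a + f b" and der: "\<And>a. f (der A a) = der B (f a)"
    and intertwine: "\<And>a. f (smul A s a) = smul B r (f a)"
  shows "f (smul A (\<delta> s) a) = smul B (\<delta> r) (f a)"
proof -
  have "f (der A (smul A s a)) = smul B r (der B (f a)) + f (smul A (\<delta> s) a)"
    by (simp add: cs_der_smul[OF A s] add intertwine der)
  moreover have "f (der A (smul A s a)) = smul B r (der B (f a)) + smul B (\<delta> r) (f a)"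
    by (simp add: der intertwine cs_der_smul[OF B r])
  ultimately show ?thesis by simp
qed

section \<open>k-isomorphisms between R-conformal superalgebras are R-linear\<close>

text \<open>Every r in R is matched by some s in R with f(s a) = r f(a): the conjugate of
  r_{A2} lies in Ctd_k(A1), which is the image of R.\<close>

lemma k_iso_transports_scalars:
  assumes A1: "conformal_superalgebra laurent_polys fls_deriv A1"
    and A2: "conformal_superalgebra laurent_polys fls_deriv A2"
    and can1: "canonical_map_is_iso A1"
    and iso: "conformal_iso const_scalars A1 A2 f"
    and r: "r \<in> laurent_polys"
  shows "\<exists>s\<in>laurent_polys. \<forall>a. f (smul A1 s a) = smul A2 r (f a)"
proof -
  have "bij f" and f: "conformal_hom const_scalars A1 A2 f"
    using iso unfolding conformal_iso_def by blast+
  have g: "conformal_hom const_scalars A2 A1 (inv f)"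
    using conformal_iso_inverse[OF A1 A2 iso] unfolding conformal_iso_def by blast
  have "inv f \<circ> smul A2 r \<circ> f \<in> Ctd_k A1"
  proof (rule Ctd_k_conjugate[OF f g])
    show "inv f (f a) = a" for a using \<open>bij f\<close> by (simp add: bij_is_inj)
    show "smul A2 r \<in> Ctd_k A2"
      by (rule smul_in_Ctd_k[OF A2 const_scalars_subset_laurent_polys r])
  qed
  moreover have "(\<lambda>s. smul A1 s) ` laurent_polys = Ctd_k A1"
    using can1 bij_betw_imp_surj_on unfolding canonical_map_is_iso_def by blast
  ultimately obtain s where s: "s \<in> laurent_polys" "smul A1 s = inv f \<circ> smul A2 r \<circ> f"
    by (metis (no_types, lifting) imageE)
  have "f (smul A1 s a) = smul A2 r (f a)" for a
    using \<open>bij f\<close> by (simp add: s(2) bij_is_surj surj_f_inv_f)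
  thus ?thesis using s(1) by blast
qed

lemma scalar_determined_by_image:
  assumes can: "canonical_map_is_iso A" and "inj f"
    and "s \<in> laurent_polys" "s' \<in> laurent_polys"
    and "\<And>a. f (smul A s a) = f (smul A s' a)"
  shows "s = s'"
proof -
  have "smul A s = smul A s'" using assms(2,5) by (auto simp: inj_eq)
  thus ?thesis using can assms(3,4) bij_betw_imp_inj_on
    unfolding canonical_map_is_iso_def by (metis inj_onD)
qed

text \<open>A k-isomorphism intertwines the actions of t and of t^-1: the scalars s, s' it
  matches with t, t^-1 satisfy s' = 1 by the Leibniz rule and s s' = 1, so s = t.\<close>

lemma k_iso_intertwines_X:
  assumes A1: "conformal_superalgebra laurent_polys fls_deriv A1"
    and A2: "conformal_superalgebra laurent_polys fls_deriv A2"
    and can1: "canonical_map_is_iso A1"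
    and iso: "conformal_iso const_scalars A1 A2 f"
  shows "\<forall>a. f (smul A1 fls_X a) = smul A2 fls_X (f a)"
    and "\<forall>a. f (smul A1 fls_X_inv a) = smul A2 fls_X_inv (f a)"
proof -
  have "inj f" and f: "conformal_hom const_scalars A1 A2 f"
    using iso unfolding conformal_iso_def bij_def by blast+
  have f_add: "\<And>a b. f (a + b) = f a + f b" and f_der: "\<And>a. f (der A1 a) = der A2 (f a)"
    using f unfolding conformal_hom_def by blast+
  note transport = k_iso_transports_scalars[OF A1 A2 can1 iso]
  note scalar_eq = scalar_determined_by_image[OF can1 \<open>inj f\<close>]
  obtain s where s: "s \<in> laurent_polys" "\<And>a. f (smul A1 s a) = smul A2 fls_X (f a)"
    using transport[OF X_in_laurent_polys] by blast
  obtain s' where s': "s' \<in> laurent_polys" "\<And>a. f (smul A1 s' a) = smul A2 fls_X_inv (f a)"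
    using transport[OF X_inv_in_laurent_polys] by blast
  have "fls_deriv s = 1"
    using intertwining_derivative[OF A1 A2 X_in_laurent_polys s(1) f_add f_der s(2)]
    by (intro scalar_eq) (simp_all add: deriv_in_laurent_polys[OF s(1)]
          one_in_laurent_polys cs_one_smul[OF A1] cs_one_smul[OF A2])
  moreover have "s * s' = 1"
  proof (rule scalar_eq)
    show "s * s' \<in> laurent_polys" using s(1) s'(1) by (rule mult_in_laurent_polys)
    show "f (smul A1 (s * s') a) = f (smul A1 1 a)" for a
      using cs_mult_smul[OF A2 X_in_laurent_polys X_inv_in_laurent_polys, of "f a"]
      by (simp add: cs_mult_smul[OF A1 s(1) s'(1)] s(2) s'(2) cs_one_smul[OF A1]
            cs_one_smul[OF A2] fls_X_times_conv_shift)
  qed (rule one_in_laurent_polys)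
  ultimately have "s = fls_X" using s'(1) by (rule unit_with_derivative_one)
  moreover from this have "s' = fls_X_inv"
    using \<open>s * s' = 1\<close> inverse_unique[of s s'] by (simp add: fls_inverse_X)
  ultimately show "\<forall>a. f (smul A1 fls_X a) = smul A2 fls_X (f a)"
    and "\<forall>a. f (smul A1 fls_X_inv a) = smul A2 fls_X_inv (f a)"
    using s(2) s'(2) by simp_all
qed

text \<open>The scalars whose action f intertwines form a subring of R containing k, t and
  t^-1, hence all of R: every k-isomorphism is R-linear.\<close>

lemma k_iso_is_R_linear:
  assumes A1: "conformal_superalgebra laurent_polys fls_deriv A1"
    and A2: "conformal_superalgebra laurent_polys fls_deriv A2"
    and can1: "canonical_map_is_iso A1"
    and iso: "conformal_iso const_scalars A1 A2 f"
    and r: "r \<in> laurent_polys"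
  shows "\<forall>a. f (smul A1 r a) = smul A2 r (f a)"
  using r
proof (induction rule: laurent_polys_induct)
  case (const c) show ?case
    using iso unfolding conformal_iso_def conformal_hom_def const_scalars_def by blast
next
  case X show ?case by (rule k_iso_intertwines_X(1)[OF A1 A2 can1 iso])
next
  case X_inv show ?case by (rule k_iso_intertwines_X(2)[OF A1 A2 can1 iso])
next
  case (add p q)
  have "f (a + b) = f a + f b" for a b
    using iso unfolding conformal_iso_def conformal_hom_def by blast
  thus ?case using add by (simp add: cs_add_smul[OF A1] cs_add_smul[OF A2])
next
  case (mult p q) thus ?case by (simp add: cs_mult_smul[OF A1] cs_mult_smul[OF A2])
qed

theorem corollary3p27:
  fixes A1 :: "('k::field_char_0 fls, 'a::ab_group_add) cstruct"
    and A2 :: "('k fls, 'b::ab_group_add) cstruct"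
  assumes "conformal_superalgebra laurent_polys fls_deriv A1"
    and "conformal_superalgebra laurent_polys fls_deriv A2"
    and "canonical_map_is_iso A1"
    and "canonical_map_is_iso A2"
  shows "conformal_isomorphic const_scalars A1 A2 \<longleftrightarrow> conformal_isomorphic laurent_polys A1 A2"
proof
  assume "conformal_isomorphic const_scalars A1 A2"
  then obtain f where iso: "conformal_iso const_scalars A1 A2 f"
    unfolding conformal_isomorphic_def by blast
  have "\<forall>r\<in>laurent_polys. \<forall>a. f (smul A1 r a) = smul A2 r (f a)"
    using k_iso_is_R_linear[OF assms(1-3) iso] by blast
  hence "conformal_iso laurent_polys A1 A2 f"
    using iso unfolding conformal_iso_def conformal_hom_def by blast
  thus "conformal_isomorphic laurent_polys A1 A2" unfolding conformal_isomorphic_def by blast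
next
  assume "conformal_isomorphic laurent_polys A1 A2"
  thus "conformal_isomorphic const_scalars A1 A2"
    using conformal_hom_restrict[OF _ const_scalars_subset_laurent_polys]
    unfolding conformal_isomorphic_def conformal_iso_def by blast
qed

end
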